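(* Let $\overline{G}$ be the roommate diversity game described in the context. For every outcome $\pi$ of $\overline{G}$ that is not top-type, there exists a top-type outcome $\pi'$ that is more popular than $\pi$, i.e. $\phi(\pi',\pi)>0$.
   Context: In a roommate diversity game with agent set $N=R\cup B$ ($R$ red, $B$ blue) and room size $s$, an outcome is a partition of $N$ into rooms of size $s$; $\pi(a)$ is the room containing $a$ and $\theta(C)=|C\cap R|/|C|$. Each agent $a$ has a trichotomous preference given by a partition of the fractions into sets $D_a^+$ (approved), $D_a^n$ (neutral), $D_a^-$ (disapproved), possibly empty, with approved $\succ$ neutral $\succ$ disapproved and indifference within each set. Agent $a$ prefers $\pi$ to $\pi'$ if it strictly prefers $\theta(\pi(a))$ to $\theta(\pi'(a))$; $N(\pi,\pi')$ is the set of agents preferring $\pi$ to $\pi'$ and $\phi(\pi,\pi')=|N(\pi,\pi')|-|N(\pi',\pi)|$. The game $\overline{G}$: $R=\{r_1,r_2,r_3\}$, $B=\{b_1,\dots,b_6\}$, $s=3$; $r_1$: $D^+=\{1/3\}$, $D^-=\{2/3,1\}$; $r_2,r_3$: $D^+=\{2/3\}$, $D^-=\{1/3,1\}$; $b_1,\dots,b_4$: $D^+=\{1/3\}$, $D^n=\{2/3\}$, $D^-=\{0\}$; $b_5,b_6$: $D^+=\{0\}$, $D^-=\{1/3,2/3\}$ (a red agent is never in a room of fraction $0$, a blue agent never in one of fraction $1$). An outcome is top-type if it equals $\{\{r_1,\hat b_1,\hat b_2\},\{r_2,r_3,\hat b_3\},\{b_5,b_6,\hat b_4\}\}$ for some enumeration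 $\hat b_1,\dots,\hat b_4$ of $\{b_1,b_2,b_3,b_4\}$. *)

theory Defs
  imports Complex_Main "HOL-Library.Disjoint_Sets"
begin

datatype agent = R1 | R2 | R3 | B1 | B2 | B3 | B4 | B5 | B6

definition Red :: "agent set" where "Red = {R1, R2, R3}"
definition Blue :: "agent set" where "Blue = {B1, B2, B3, B4, B5, B6}"

definition room_size :: nat where "room_size = 3"

definition outcome :: "agent set set \<Rightarrow> bool" where
  "outcome P \<longleftrightarrow> partition_on (UNIV :: agent set) P \<and> (\<forall>C\<in>P. card C = room_size)"

definition room :: "agent set set \<Rightarrow> agent \<Rightarrow> agent set" where
  "room P a = (THE C. C \<in> P \<and> a \<in> C)"

definition theta :: "agent set \<Rightarrow> real" where
  "theta C = real (card (C \<inter> Red)) / real (card C)"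

definition Dplus :: "agent \<Rightarrow> real set" where
  "Dplus a = (case a of
      R1 \<Rightarrow> {1/3} | R2 \<Rightarrow> {2/3} | R3 \<Rightarrow> {2/3}
    | B1 \<Rightarrow> {1/3} | B2 \<Rightarrow> {1/3} | B3 \<Rightarrow> {1/3} | B4 \<Rightarrow> {1/3}
    | B5 \<Rightarrow> {0} | B6 \<Rightarrow> {0})"

definition Dneutral :: "agent \<Rightarrow> real set" where
  "Dneutral a = (case a of
      R1 \<Rightarrow> {} | R2 \<Rightarrow> {} | R3 \<Rightarrow> {}
    | B1 \<Rightarrow> {2/3} | B2 \<Rightarrow> {2/3} | B3 \<Rightarrow> {2/3} | B4 \<Rightarrow> {2/3}
    | B5 \<Rightarrow> {} | B6 \<Rightarrow> {})"

definition Dminus :: "agent \<Rightarrow> real set" where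
  "Dminus a = (case a of
      R1 \<Rightarrow> {2/3, 1} | R2 \<Rightarrow> {1/3, 1} | R3 \<Rightarrow> {1/3, 1}
    | B1 \<Rightarrow> {0} | B2 \<Rightarrow> {0} | B3 \<Rightarrow> {0} | B4 \<Rightarrow> {0}
    | B5 \<Rightarrow> {1/3, 2/3} | B6 \<Rightarrow> {1/3, 2/3})"

definition prefers_frac :: "agent \<Rightarrow> real \<Rightarrow> real \<Rightarrow> bool" where
  "prefers_frac a x y \<longleftrightarrow>
     (x \<in> Dplus a \<and> (y \<in> Dneutral a \<or> y \<in> Dminus a)) \<or> (x \<in> Dneutral a \<and> y \<in> Dminus a)"

definition Nset :: "agent set set \<Rightarrow> agent set set \<Rightarrow> agent set" where
  "Nset P P' = {a. prefers_frac a (theta (room P a)) (theta (room P' a))}"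

definition phi :: "agent set set \<Rightarrow> agent set set \<Rightarrow> int" where
  "phi P P' = int (card (Nset P P')) - int (card (Nset P' P))"

definition top_type :: "agent set set \<Rightarrow> bool" where
  "top_type P \<longleftrightarrow> (\<exists>x1 x2 x3 x4. distinct [x1, x2, x3, x4] \<and> {x1, x2, x3, x4} = {B1, B2, B3, B4} \<and>
       P = {{R1, x1, x2}, {R2, R3, x3}, {B5, B6, x4}})"

end

theory Submission
  imports Defs
begin

text \<open>
  Averaging over the twelve top-type outcomes. Summing \<open>\<phi>(\<pi>', \<pi>)\<close> over all top-type
  \<open>\<pi>'\<close> and exchanging the two sums gives \<open>\<Sum>\<^sub>a gain a (\<theta>(\<pi>(a)))\<close>, where \<open>gain a v\<close>
  is the number of top-type outcomes that \<open>a\<close> prefers to the fraction \<open>v\<close> minus the number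
  it likes less. The agents \<open>r\<^sub>1, r\<^sub>2, r\<^sub>3, b\<^sub>5, b\<^sub>6\<close> sit at an approved fraction in every
  top-type outcome, so their gain is 12 at a disapproved fraction and 0 otherwise; each of
  \<open>b\<^sub>1, ..., b\<^sub>4\<close> is at 2/3, 0 and 1/3 in 3, 3 and 6 of them, which gives it gain 9, -6, 3
  at 0, 1/3, 2/3. Splitting by how the red agents share rooms, the total is positive if they
  are all together or all apart, and if exactly two of them share a room it is non-negative
  and vanishes only when \<open>r\<^sub>1\<close> is the lone red and \<open>b\<^sub>5, b\<^sub>6\<close> share the all-blue room,
  i.e. when \<open>\<pi>\<close> is top-type.
\<close>

lemma UNIV_agent: "(UNIV :: agent set) = {R1, R2, R3, B1, B2, B3, B4, B5, B6}"
  by (rule UNIV_eq_I, case_tac x, simp_all)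

instance agent :: finite
  by standard (simp add: UNIV_agent)

lemma UNIV_eq_Red_Un_Blue: "(UNIV :: agent set) = Red \<union> Blue"
  by (auto simp: Red_def Blue_def UNIV_agent)

lemma Red_Int_Blue: "Red \<inter> Blue = {}"
  by (auto simp: Red_def Blue_def)

lemma card_3_elemE:
  assumes "card S = 3" "a \<in> S"
  obtains y z where "S = {a, y, z}" "distinct [a, y, z]"
proof -
  from assms(1) obtain x y z where "S = {x, y, z}" "distinct [x, y, z]"
    unfolding card_3_iff by auto
  with assms(2) that show ?thesis
    by (cases "a = x"; cases "a = y"; auto simp: insert_commute)
qed

lemma card_3_two_elemsE:
  assumes "card S = 3" "a \<in> S" "b \<in> S" "a \<noteq> b"
  obtains y where "S = {a, b, y}" "distinct [a, b, y]"
proof -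
  from assms(1,2) obtain y z where "S = {a, y, z}" "distinct [a, y, z]"
    by (rule card_3_elemE)
  with assms(3,4) that show ?thesis
    by (cases "b = y"; auto simp: insert_commute)
qed

section \<open>Rooms of an outcome\<close>

lemma room_eq:
  assumes "outcome P" "C \<in> P" "a \<in> C"
  shows "room P a = C"
  unfolding room_def
proof (rule the_equality)
  fix D assume "D \<in> P \<and> a \<in> D"
  moreover have "disjoint P"
    using assms(1) by (simp add: outcome_def partition_on_def)
  ultimately show "D = C"
    using assms(2,3) by (meson disjointD disjoint_iff)
qed (use assms(2,3) in blast)

lemma
  assumes "outcome P"
  shows room_in_outcome: "room P a \<in> P" and in_own_room: "a \<in> room P a"
proof -
  have "\<Union>P = UNIV"
    using assms by (simp add: outcome_def partition_on_def)
  then obtain C where "C \<in> P" "a \<in> C" by blast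
  then show "room P a \<in> P" "a \<in> room P a"
    using room_eq[OF assms] by auto
qed

lemma card_room: "outcome P \<Longrightarrow> card (room P a) = 3"
  using room_in_outcome by (auto simp: outcome_def room_size_def)

lemma room_eq_room: "outcome P \<Longrightarrow> b \<in> room P a \<Longrightarrow> room P b = room P a"
  by (simp add: room_eq room_in_outcome)

lemma room_sym: "outcome P \<Longrightarrow> b \<in> room P a \<Longrightarrow> a \<in> room P b"
  by (metis in_own_room room_eq_room)

lemma room_disjoint: "outcome P \<Longrightarrow> b \<notin> room P a \<Longrightarrow> room P a \<inter> room P b = {}"
  by (metis disjoint_iff in_own_room room_eq_room)

lemma outcome_three_rooms:
  assumes P: "outcome P" and "A \<in> P" "B \<in> P" "A \<noteq> B"
  shows "P = {A, B, - (A \<union> B)}"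
proof -
  have card_A_B: "card A = 3" "card B = 3"
    using P assms(2,3) by (auto simp: outcome_def room_size_def)
  have "A \<inter> B = {}"
    using P assms(2-4) by (auto simp: outcome_def partition_on_def dest: disjointD)
  then have "card (- (A \<union> B)) = 3"
    using card_A_B
    by (simp add: Compl_eq_Diff_UNIV card_Diff_subset card_Un_disjoint) (simp add: UNIV_agent)
  have third: "C = - (A \<union> B)" if "C \<in> P" "C \<noteq> A" "C \<noteq> B" for C
  proof -
    have "C \<inter> A = {}" "C \<inter> B = {}"
      using P that assms(2,3) by (auto simp: outcome_def partition_on_def dest: disjointD)
    then have "C \<subseteq> - (A \<union> B)" by blast
    moreover have "card C = 3"
      using P that(1) by (auto simp: outcome_def room_size_def)
    ultimately show ?thesis
      using \<open>card (- (A \<union> B)) = 3\<close> by (simp add: card_subset_eq)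
  qed
  have "- (A \<union> B) \<noteq> {}"
    using \<open>card (- (A \<union> B)) = 3\<close> by (metis card.empty zero_neq_numeral)
  then obtain x where "x \<notin> A \<union> B"
    by blast
  then have "room P x \<noteq> A" "room P x \<noteq> B"
    using in_own_room[OF P, of x] by auto
  then have "room P x = - (A \<union> B)"
    using third room_in_outcome[OF P] by blast
  then have "- (A \<union> B) \<in> P"
    using room_in_outcome[OF P, of x] by simp
  then show ?thesis
    using third assms(2,3) by auto
qed

definition room_frac :: "agent set set \<Rightarrow> agent \<Rightarrow> real" where
  "room_frac P a = theta (room P a)"

lemma room_frac_eq: "outcome P \<Longrightarrow> room_frac P a = card (room P a \<inter> Red) / 3"
  by (simp add: room_frac_def theta_def card_room)

lemma room_frac_red_room:
  "outcome P \<Longrightarrow> a \<in> room P r \<Longrightarrow> room_frac P a = card (room P r \<inter> Red) / 3"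
  by (simp add: room_frac_eq room_eq_room)

lemma room_frac_eq_zero:
  assumes "outcome P" "\<forall>r\<in>Red. a \<notin> room P r"
  shows "room_frac P a = 0"
proof -
  have "room P a \<inter> Red = {}"
    using assms by (metis disjoint_iff in_own_room room_eq_room)
  then show ?thesis
    by (simp add: room_frac_eq assms(1))
qed

definition score :: "agent \<Rightarrow> real \<Rightarrow> real \<Rightarrow> int" where
  "score a x y = of_bool (prefers_frac a x y) - of_bool (prefers_frac a y x)"

lemma phi_eq_sum_score: "phi P' P = (\<Sum>a\<in>UNIV. score a (room_frac P' a) (room_frac P a))"
  by (simp add: phi_def Nset_def score_def room_frac_def sum_subtractf)

section \<open>Top-type outcomes\<close>

definition blue_enumeration :: "agent \<times> agent \<times> agent \<times> agent \<Rightarrow> bool" where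
  "blue_enumeration e \<longleftrightarrow> (case e of (x1, x2, x3, x4) \<Rightarrow>
     distinct [x1, x2, x3, x4] \<and> {x1, x2, x3, x4} = {B1, B2, B3, B4})"

fun top_outcome :: "agent \<times> agent \<times> agent \<times> agent \<Rightarrow> agent set set" where
  "top_outcome (x1, x2, x3, x4) = {{R1, x1, x2}, {R2, R3, x3}, {B5, B6, x4}}"

fun top_frac :: "agent \<times> agent \<times> agent \<times> agent \<Rightarrow> agent \<Rightarrow> real" where
  "top_frac (x1, x2, x3, x4) a =
     (if a \<in> {R1, x1, x2} then 1/3 else if a \<in> {R2, R3, x3} then 2/3 else 0)"

lemma top_type_top_outcome: "blue_enumeration e \<Longrightarrow> top_type (top_outcome e)"
  by (cases e) (auto simp: blue_enumeration_def top_type_def)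

lemma
  assumes "blue_enumeration e"
  shows outcome_top_outcome: "outcome (top_outcome e)"
    and room_frac_top_outcome: "room_frac (top_outcome e) a = top_frac e a"
proof -
  obtain x1 x2 x3 x4 where e: "e = (x1, x2, x3, x4)"
    by (cases e)
  have dist: "distinct [x1, x2, x3, x4]" and blue: "{x1, x2, x3, x4} = {B1, B2, B3, B4}"
    using assms by (auto simp: e blue_enumeration_def)
  have not_red: "x1 \<notin> {R1, R2, R3, B5, B6}" "x2 \<notin> {R1, R2, R3, B5, B6}"
    "x3 \<notin> {R1, R2, R3, B5, B6}" "x4 \<notin> {R1, R2, R3, B5, B6}"
    using blue by blast+
  let ?A = "{R1, x1, x2}" and ?B = "{R2, R3, x3}" and ?C = "{B5, B6, x4}"
  have cover: "a \<in> ?A \<union> ?B \<union> ?C" for a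
    using blue by (cases a) auto
  have disj: "?A \<inter> ?B = {}" "?A \<inter> ?C = {}" "?B \<inter> ?C = {}"
    using dist not_red by auto
  then have "disjoint {?A, ?B, ?C}"
    by (auto simp: disjoint_def)
  moreover have "distinct [R1, x1, x2]" "distinct [R2, R3, x3]" "distinct [B5, B6, x4]"
    using dist not_red by auto
  then have cards: "card ?A = 3" "card ?B = 3" "card ?C = 3"
    by (metis distinct_card empty_set length_Cons list.size(3) list.simps(15)
        numeral_3_eq_3)+
  ultimately show out: "outcome (top_outcome e)"
    using cover by (auto simp: e outcome_def partition_on_def room_size_def)
  have "?A \<inter> Red = {R1}" "?B \<inter> Red = {R2, R3}" "?C \<inter> Red = {}"
    using not_red by (auto simp: Red_def)
  then have theta: "theta ?A = 1/3" "theta ?B = 2/3" "theta ?C = 0"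
    using cards by (simp_all add: theta_def)
  have rooms: "?A \<in> top_outcome e" "?B \<in> top_outcome e" "?C \<in> top_outcome e"
    by (simp_all add: e)
  consider "a \<in> ?A" | "a \<in> ?B" "a \<notin> ?A" | "a \<in> ?C" "a \<notin> ?A" "a \<notin> ?B"
    using cover disj by blast
  then show "room_frac (top_outcome e) a = top_frac e a"
  proof cases
    case 1
    then show ?thesis using room_eq[OF out rooms(1) 1(1)] theta by (simp add: room_frac_def e)
  next
    case 2
    then show ?thesis using room_eq[OF out rooms(2) 2(1)] theta by (simp add: room_frac_def e)
  next
    case 3
    then show ?thesis using room_eq[OF out rooms(3) 3(1)] theta by (simp add: room_frac_def e)
  qed
qed

text \<open>One enumeration per top-type outcome: \<open>x\<^sub>1\<close> precedes \<open>x\<^sub>2\<close> in the order \<open>b\<^sub>1, ..., b\<^sub>4\<close>.\<close>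

definition top_enumerations :: "(agent \<times> agent \<times> agent \<times> agent) list" where
  "top_enumerations =
     [(B3,B4,B1,B2), (B2,B4,B1,B3), (B2,B3,B1,B4), (B3,B4,B2,B1), (B1,B4,B2,B3), (B1,B3,B2,B4),
      (B2,B4,B3,B1), (B1,B4,B3,B2), (B1,B2,B3,B4), (B2,B3,B4,B1), (B1,B3,B4,B2), (B1,B2,B4,B3)]"

lemma blue_enumeration_top_enumerations: "e \<in> set top_enumerations \<Longrightarrow> blue_enumeration e"
  by (auto simp: top_enumerations_def blue_enumeration_def simp del: insert_commute)

definition gain :: "agent \<Rightarrow> real \<Rightarrow> int" where
  "gain a v = (\<Sum>e\<in>set top_enumerations. score a (top_frac e a) v)"

lemma sum_phi_top_outcomes:
  "(\<Sum>e\<in>set top_enumerations. phi (top_outcome e) P) = (\<Sum>a\<in>UNIV. gain a (room_frac P a))"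
proof -
  have "(\<Sum>e\<in>set top_enumerations. phi (top_outcome e) P) =
        (\<Sum>e\<in>set top_enumerations. \<Sum>a\<in>UNIV. score a (top_frac e a) (room_frac P a))"
    by (intro sum.cong refl)
      (simp add: phi_eq_sum_score room_frac_top_outcome blue_enumeration_top_enumerations)
  also have "\<dots> = (\<Sum>a\<in>UNIV. gain a (room_frac P a))"
    unfolding gain_def by (rule sum.swap)
  finally show ?thesis .
qed

lemma score_approved:
  assumes "a \<in> {R1, R2, R3, B5, B6}" "x \<in> Dplus a"
  shows "score a x v = of_bool (v \<in> Dminus a)"
  using assms by (auto simp: score_def prefers_frac_def Dplus_def Dneutral_def Dminus_def)

lemma gain_fixed:
  assumes "a \<in> {R1, R2, R3, B5, B6}"
  shows "gain a v = 12 * of_bool (v \<in> Dminus a)"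
proof -
  have "gain a v = 12 * score a (top_frac (B1, B2, B3, B4) a) v"
    using assms by (auto simp: gain_def top_enumerations_def)
  also have "\<dots> = 12 * of_bool (v \<in> Dminus a)"
    using assms by (subst score_approved) (auto simp: Dplus_def)
  finally show ?thesis .
qed

lemma prefers_frac_mobile:
  assumes "a \<in> {B1, B2, B3, B4}"
  shows "prefers_frac a x y \<longleftrightarrow> (x = 1/3 \<and> (y = 2/3 \<or> y = 0)) \<or> (x = 2/3 \<and> y = 0)"
  using assms by (auto simp: prefers_frac_def Dplus_def Dneutral_def Dminus_def)

lemma gain_mobile:
  assumes "a \<in> {B1, B2, B3, B4}"
  shows "gain a v = (if v = 0 then 9 else if v = 1/3 then -6 else if v = 2/3 then 3 else 0)"
proof -
  have "gain a v = 3 * score a (2/3) v + 3 * score a 0 v + 6 * score a (1/3) v"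
    using assms by (auto simp: gain_def top_enumerations_def)
  then show ?thesis
    using assms by (simp add: score_def prefers_frac_mobile)
qed

section \<open>Positivity of the total gain\<close>

lemma gain_sum_reds_together:
  assumes P: "outcome P" and "R2 \<in> room P R1" "R3 \<in> room P R1"
  shows "0 < (\<Sum>a\<in>UNIV. gain a (room_frac P a))"
proof -
  have "Red \<subseteq> room P R1"
    using assms in_own_room[OF P] by (auto simp: Red_def)
  moreover have "card Red = card (room P R1)"
    using card_room[OF P] by (simp add: Red_def)
  ultimately have red_room: "room P R1 = Red"
    using card_subset_eq[OF finite] by metis
  have "room_frac P a = (if a \<in> Red then 1 else 0)" for a
  proof (cases "a \<in> Red")
    case True
    then show ?thesis
      using room_frac_red_room[OF P, of a R1] red_room by (simp add: Red_def)
  next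
    case False
    then have "\<forall>r\<in>Red. a \<notin> room P r"
      using red_room room_eq_room[OF P] by (metis in_own_room)
    with False show ?thesis
      using room_frac_eq_zero[OF P] by simp
  qed
  then show ?thesis
    by (simp add: UNIV_agent Red_def gain_fixed gain_mobile Dminus_def)
qed

lemma gain_sum_reds_apart:
  assumes P: "outcome P" and "R2 \<notin> room P R1" "R3 \<notin> room P R1" "R3 \<notin> room P R2"
  shows "0 < (\<Sum>a\<in>UNIV. gain a (room_frac P a))"
proof -
  have "R1 \<notin> room P R2" "R1 \<notin> room P R3" "R2 \<notin> room P R3"
    using assms room_sym[OF P] by blast+
  then have single_red: "room P r \<inter> Red = {r}" if "r \<in> Red" for r
    using that assms in_own_room[OF P] by (auto simp: Red_def)
  have "room P R1 \<noteq> room P R2" "room P R3 \<noteq> room P R1" "room P R3 \<noteq> room P R2"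
    using assms in_own_room[OF P] by metis+
  then have "room P R3 = - (room P R1 \<union> room P R2)"
    using outcome_three_rooms[OF P room_in_outcome[OF P] room_in_outcome[OF P]]
      room_in_outcome[OF P, of R3] by blast
  then have "\<exists>r\<in>Red. a \<in> room P r" for a
    by (auto simp: Red_def)
  then have "room_frac P a = 1/3" for a
    using room_frac_red_room[OF P] single_red by fastforce
  then show ?thesis
    by (simp add: UNIV_agent gain_fixed gain_mobile Dminus_def)
qed

lemma red_gain_pair:
  assumes "r \<in> Red"
  shows "(\<Sum>a\<in>Red. gain a (if a = r then 1/3 else 2/3)) = (if r = R1 then 0 else 24)"
  using assms by (auto simp: Red_def gain_fixed Dminus_def)

lemma blue_gain_pair:
  assumes "{y, u, v} \<subseteq> Blue" "distinct [y, u, v]"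
  defines "S \<equiv> \<Sum>b\<in>Blue. gain b (if b = y then 2/3 else if b \<in> {u, v} then 1/3 else 0)"
  shows "0 < S \<or> (S = 0 \<and> {y, u, v} \<subseteq> {B1, B2, B3, B4})"
  using assms(1,2) unfolding S_def
  by (cases y; cases u; cases v) (simp_all add: Blue_def gain_fixed gain_mobile Dminus_def)

lemma top_type_of_rooms:
  assumes P: "outcome P" and rooms: "{R1, u, v} \<in> P" "{R2, R3, y} \<in> P"
    and blue: "{u, v, y} \<subseteq> {B1, B2, B3, B4}"
  shows "top_type P"
proof -
  let ?A = "{R1, u, v}" and ?B = "{R2, R3, y}"
  have "?A \<noteq> ?B"
    using blue by auto
  then have P_eq: "P = {?A, ?B, - (?A \<union> ?B)}"
    using outcome_three_rooms[OF P rooms] by simp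
  have "card ?A = 3"
    using P rooms(1) by (simp add: outcome_def room_size_def)
  then have "u \<noteq> v"
    by (cases "u = v") (auto simp: card_insert_if split: if_splits)
  moreover have "y \<notin> ?A"
    using room_eq[OF P rooms(1), of y] room_eq[OF P rooms(2), of y] \<open>?A \<noteq> ?B\<close> by auto
  then have "y \<noteq> u" "y \<noteq> v"
    by auto
  ultimately have "card {u, v, y} = 3"
    by simp
  then have "card ({B1, B2, B3, B4} - {u, v, y}) = 1"
    using blue by (simp add: card_Diff_subset)
  then obtain w where w: "{B1, B2, B3, B4} - {u, v, y} = {w}"
    by (rule card_1_singletonE)
  then have blue_eq: "{u, v, y, w} = {B1, B2, B3, B4}" and "w \<notin> {u, v, y}"
    using blue by auto
  then have "distinct [u, v, y, w]"
    using \<open>u \<noteq> v\<close> \<open>y \<noteq> u\<close> \<open>y \<noteq> v\<close> by auto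
  have "- (?A \<union> ?B) = {B5, B6, w}"
  proof (rule set_eqI)
    fix x
    show "x \<in> - (?A \<union> ?B) \<longleftrightarrow> x \<in> {B5, B6, w}"
      using blue_eq \<open>distinct [u, v, y, w]\<close> by (cases x) auto
  qed
  then have "P = {{R1, u, v}, {R2, R3, y}, {B5, B6, w}}"
    using P_eq by simp
  then show ?thesis
    unfolding top_type_def using blue_eq \<open>distinct [u, v, y, w]\<close> by blast
qed

lemma room_frac_red_pair:
  assumes P: "outcome P" and reds: "Red = {r, r', r''}" "distinct [r, r', r'']"
    and pair: "r' \<in> room P r" "r'' \<notin> room P r"
  shows "room_frac P a =
    (if a \<in> room P r then 2/3 else if a \<in> room P r'' then 1/3 else 0)"
proof -
  have "r \<notin> room P r''" "r' \<notin> room P r''"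
    using pair room_sym[OF P] room_eq_room[OF P] by metis+
  then have "room P r'' \<inter> Red = {r''}"
    using in_own_room[OF P] unfolding reds by auto
  moreover have "room P r \<inter> Red = {r, r'}"
    using pair in_own_room[OF P] unfolding reds by auto
  moreover have "\<forall>x\<in>Red. a \<notin> room P x" if "a \<notin> room P r" "a \<notin> room P r''"
    using that room_eq_room[OF P pair(1)] unfolding reds by auto
  ultimately show ?thesis
    using room_frac_red_room[OF P, of a r] room_frac_red_room[OF P, of a r'']
      room_frac_eq_zero[OF P, of a] reds(2)
    by auto
qed

lemma red_pair_roomsE:
  assumes P: "outcome P" and reds: "Red = {r, r', r''}" "distinct [r, r', r'']"
    and pair: "r' \<in> room P r" "r'' \<notin> room P r"
  obtains y u v where "room P r = {r, r', y}" "room P r'' = {r'', u, v}"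
    "{y, u, v} \<subseteq> Blue" "distinct [y, u, v]"
proof -
  obtain y where A: "room P r = {r, r', y}" "distinct [r, r', y]"
    using card_3_two_elemsE[OF card_room[OF P] in_own_room[OF P] pair(1)] reds(2) by auto
  obtain u v where B: "room P r'' = {r'', u, v}" "distinct [r'', u, v]"
    using card_3_elemE[OF card_room[OF P] in_own_room[OF P]] by blast
  have in_r: "r \<in> room P r" "r' \<in> room P r" "y \<in> room P r"
    using A(1) by auto
  have "u \<in> room P r''" "v \<in> room P r''"
    using B(1) by auto
  then have not_in_r: "u \<notin> room P r" "v \<notin> room P r"
    using room_disjoint[OF P pair(2)] by auto
  have "y \<notin> Red"
    using A(2) in_r(3) pair(2) unfolding reds by auto
  moreover have "u \<notin> Red" "v \<notin> Red"
    using B(2) not_in_r in_r(1,2) unfolding reds by auto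
  ultimately have "{y, u, v} \<subseteq> Blue"
    using UNIV_eq_Red_Un_Blue by blast
  moreover have "distinct [y, u, v]"
    using B(2) not_in_r in_r(3) by auto
  ultimately show ?thesis
    using A(1) B(1) that by blast
qed

lemma gain_sum_red_pair:
  assumes P: "outcome P" and reds: "Red = {r, r', r''}" "distinct [r, r', r'']"
    and pair: "r' \<in> room P r" "r'' \<notin> room P r"
  shows "0 < (\<Sum>a\<in>UNIV. gain a (room_frac P a)) \<or> top_type P"
proof -
  obtain y u v where A: "room P r = {r, r', y}" and B: "room P r'' = {r'', u, v}"
    and blue: "{y, u, v} \<subseteq> Blue" and yuv: "distinct [y, u, v]"
    using red_pair_roomsE[OF assms] .
  note frac = room_frac_red_pair[OF assms]
  have "r'' \<in> Red" "r \<notin> Blue" "r' \<notin> Blue" "r'' \<notin> Blue"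
    using Red_Int_Blue unfolding reds by auto
  have "(\<Sum>a\<in>UNIV. gain a (room_frac P a)) =
      (\<Sum>a\<in>Red. gain a (room_frac P a)) + (\<Sum>b\<in>Blue. gain b (room_frac P b))"
    unfolding UNIV_eq_Red_Un_Blue by (rule sum.union_disjoint) (simp_all add: Red_Int_Blue)
  also have "(\<Sum>a\<in>Red. gain a (room_frac P a)) =
      (\<Sum>a\<in>Red. gain a (if a = r'' then 1/3 else 2/3))"
    by (intro sum.cong refl) (use pair in_own_room[OF P] in \<open>auto simp: frac reds\<close>)
  also have "(\<Sum>b\<in>Blue. gain b (room_frac P b)) =
      (\<Sum>b\<in>Blue. gain b (if b = y then 2/3 else if b \<in> {u, v} then 1/3 else 0))"
    by (intro sum.cong refl) (use \<open>r \<notin> Blue\<close> \<open>r' \<notin> Blue\<close> \<open>r'' \<notin> Blue\<close> in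
        \<open>auto simp: frac A B\<close>)
  finally have total: "(\<Sum>a\<in>UNIV. gain a (room_frac P a)) =
      (if r'' = R1 then 0 else 24) +
      (\<Sum>b\<in>Blue. gain b (if b = y then 2/3 else if b \<in> {u, v} then 1/3 else 0))"
    using red_gain_pair[OF \<open>r'' \<in> Red\<close>] by simp
  show ?thesis
  proof (cases "r'' = R1 \<and> {y, u, v} \<subseteq> {B1, B2, B3, B4}")
    case True
    have "room P r = {r, r'} \<union> {y}"
      using A by auto
    also have "{r, r'} = {R2, R3}"
      using reds True by (auto simp: Red_def)
    finally have "room P r = {R2, R3, y}"
      by auto
    then have "{R2, R3, y} \<in> P"
      using room_in_outcome[OF P, of r] by simp
    moreover have "{R1, u, v} \<in> P"
      using room_in_outcome[OF P, of r''] B True by simp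
    ultimately show ?thesis
      using top_type_of_rooms[OF P] True by auto
  next
    case False
    then show ?thesis
      using total blue_gain_pair[OF blue yuv] by auto
  qed
qed

lemma gain_sum_pos:
  assumes P: "outcome P" and "\<not> top_type P"
  shows "0 < (\<Sum>a\<in>UNIV. gain a (room_frac P a))"
proof -
  consider "R2 \<in> room P R1" "R3 \<in> room P R1"
    | "R2 \<in> room P R1" "R3 \<notin> room P R1"
    | "R3 \<in> room P R1" "R2 \<notin> room P R1"
    | "R3 \<in> room P R2" "R1 \<notin> room P R2"
    | "R2 \<notin> room P R1" "R3 \<notin> room P R1" "R3 \<notin> room P R2"
    using room_sym[OF P] by blast
  then show ?thesis
  proof cases
    case 1
    then show ?thesis using gain_sum_reds_together[OF P] by blast
  next
    case 2
    then show ?thesis using gain_sum_red_pair[OF P, of R1 R2 R3] assms(2) by (simp add: Red_def)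
  next
    case 3
    then show ?thesis
      using gain_sum_red_pair[OF P, of R1 R3 R2] assms(2) by (simp add: Red_def insert_commute)
  next
    case 4
    then show ?thesis
      using gain_sum_red_pair[OF P, of R2 R3 R1] assms(2) by (simp add: Red_def insert_commute)
  next
    case 5
    then show ?thesis using gain_sum_reds_apart[OF P] by blast
  qed
qed

theorem mainTheorem8:
  assumes "outcome P" and "\<not> top_type P"
  shows "\<exists>P'. outcome P' \<and> top_type P' \<and> phi P' P > 0"
proof -
  have "0 < (\<Sum>e\<in>set top_enumerations. phi (top_outcome e) P)"
    using gain_sum_pos[OF assms] by (simp add: sum_phi_top_outcomes)
  then obtain e where "e \<in> set top_enumerations" "0 < phi (top_outcome e) P"
    by (meson not_le sum_nonpos)
  then show ?thesis
    using blue_enumeration_top_enumerations outcome_top_outcome top_type_top_outcome by blast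
qed

end
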